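(* Let $\Lambda\in\mathbb{N}$ and let $k$ be a real number with $k\ge\Lambda^2(\Lambda+1)^2$. For $\alpha\in[0,2\pi)$ and $\beta=(\beta_{-\Lambda},\dots,\beta_\Lambda)\in\mathbb{R}^{2\Lambda+1}$ let $$\bm{\omega}_\alpha^\beta:=\sum_{m=-\Lambda}^{\Lambda}\frac{e^{i(\alpha m+\beta_m)}}{\sqrt{2\Lambda+1}}\psi_m,\qquad P_\alpha^\beta:=\bm{\omega}_\alpha^\beta\langle\bm{\omega}_\alpha^\beta,\cdot\rangle.$$ Then: (i) $I=\frac{2\Lambda+1}{2\pi}\int_0^{2\pi}d\alpha\,P_\alpha^\beta$ for every $\beta$; (ii) on every $\bm{\omega}_\alpha^\beta$, $\langle L\rangle=0$ and $(\Delta L)^2=\Lambda(\Lambda+1)/3$; (iii) for all $\alpha,\beta$, $(\Delta\bm{x})^2_{\bm{\omega}_\alpha^\beta}\ge(\Delta\bm{x})^2_{\bm{\omega}_\alpha^0}$, and $$(\Delta\bm{x})^2_{\bm{\omega}_\alpha^0}<\frac{1}{\Lambda+1}\left(\frac12+\frac{1}{3\Lambda}\right),$$ which is $\le \frac{2}{3(\Lambda+1)}$ when $\Lambda\ge2$.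
   Context: (Fuzzy circle $S^1_\Lambda$.) $\mathcal{H}_\Lambda$ is a $(2\Lambda+1)$-dimensional Hilbert space with orthonormal basis $\{\psi_n\}_{n=-\Lambda}^{\Lambda}$ (inner product antilinear in the first argument). Operators: $L\psi_n=n\psi_n$; $x_+\psi_n=b_{n+1}\psi_{n+1}$, $x_-\psi_n=b_n\psi_{n-1}$, where $b_n=\sqrt{1+n(n-1)/k}$ if $1-\Lambda\le n\le\Lambda$ and $b_n=0$ otherwise (so the undefined vectors $\psi_{\pm(\Lambda+1)}$ never occur with nonzero coefficient); $x_1=(x_++x_-)/2$, $x_2=(x_+-x_-)/(2i)$, $\bm{x}^2=x_1^2+x_2^2$. For a unit vector $\bm{\chi}$, $\langle A\rangle=\langle\bm{\chi},A\bm{\chi}\rangle$, $(\Delta L)^2=\langle L^2\rangle-\langle L\rangle^2$, and $(\Delta\bm{x})^2_{\bm\chi}=\langle\bm{x}^2\rangle-\langle x_1\rangle^2-\langle x_2\rangle^2$. *)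

theory Defs
  imports "HOL-Analysis.Analysis"
begin

text \<open>Fuzzy circle. A vector of the Hilbert space H_Lambda is represented by its
coefficient function c :: int => complex w.r.t. the orthonormal basis psi_n,
with c n = 0 for n outside {-Lambda..Lambda}.\<close>

type_synonym fvec = "int \<Rightarrow> complex"

definition hspace :: "nat \<Rightarrow> fvec set" where
  "hspace Lam = {v. \<forall>n. n \<notin> {- int Lam..int Lam} \<longrightarrow> v n = 0}"

definition psi :: "int \<Rightarrow> fvec" where
  "psi n = (\<lambda>m. if m = n then 1 else 0)"

definition finner :: "nat \<Rightarrow> fvec \<Rightarrow> fvec \<Rightarrow> complex" where
  "finner Lam u v = (\<Sum>n\<in>{- int Lam..int Lam}. cnj (u n) * v n)"

definition bcoef :: "nat \<Rightarrow> real \<Rightarrow> int \<Rightarrow> complex" where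
  "bcoef Lam k n = (if 1 - int Lam \<le> n \<and> n \<le> int Lam
      then complex_of_real (sqrt (1 + real_of_int (n * (n - 1)) / k)) else 0)"

definition Lop :: "fvec \<Rightarrow> fvec" where
  "Lop v = (\<lambda>m. of_int m * v m)"

text \<open>x_+ psi_n = b_{n+1} psi_{n+1}, i.e. the coefficient at m is b_m v_{m-1}\<close>
definition xplus :: "nat \<Rightarrow> real \<Rightarrow> fvec \<Rightarrow> fvec" where
  "xplus Lam k v = (\<lambda>m. bcoef Lam k m * v (m - 1))"

text \<open>x_- psi_n = b_n psi_{n-1}, i.e. the coefficient at m is b_{m+1} v_{m+1}\<close>
definition xminus :: "nat \<Rightarrow> real \<Rightarrow> fvec \<Rightarrow> fvec" where
  "xminus Lam k v = (\<lambda>m. bcoef Lam k (m + 1) * v (m + 1))"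

definition x1op :: "nat \<Rightarrow> real \<Rightarrow> fvec \<Rightarrow> fvec" where
  "x1op Lam k v = (\<lambda>m. (xplus Lam k v m + xminus Lam k v m) / 2)"

definition x2op :: "nat \<Rightarrow> real \<Rightarrow> fvec \<Rightarrow> fvec" where
  "x2op Lam k v = (\<lambda>m. (xplus Lam k v m - xminus Lam k v m) / (2 * \<i>))"

definition xsqop :: "nat \<Rightarrow> real \<Rightarrow> fvec \<Rightarrow> fvec" where
  "xsqop Lam k v = (\<lambda>m. x1op Lam k (x1op Lam k v) m + x2op Lam k (x2op Lam k v) m)"

definition expect :: "nat \<Rightarrow> (fvec \<Rightarrow> fvec) \<Rightarrow> fvec \<Rightarrow> complex" where
  "expect Lam A chi = finner Lam chi (A chi)"

definition varL :: "nat \<Rightarrow> fvec \<Rightarrow> complex" where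
  "varL Lam chi = expect Lam (\<lambda>v. Lop (Lop v)) chi - (expect Lam Lop chi)\<^sup>2"

definition varx :: "nat \<Rightarrow> real \<Rightarrow> fvec \<Rightarrow> complex" where
  "varx Lam k chi = expect Lam (xsqop Lam k) chi
      - (expect Lam (x1op Lam k) chi)\<^sup>2 - (expect Lam (x2op Lam k) chi)\<^sup>2"

definition omega :: "nat \<Rightarrow> real \<Rightarrow> (int \<Rightarrow> real) \<Rightarrow> fvec" where
  "omega Lam \<alpha> \<beta> = (\<lambda>m. if m \<in> {- int Lam..int Lam}
      then exp (\<i> * complex_of_real (\<alpha> * of_int m + \<beta> m)) / complex_of_real (sqrt (2 * real Lam + 1))
      else 0)"

definition Pproj :: "nat \<Rightarrow> real \<Rightarrow> (int \<Rightarrow> real) \<Rightarrow> fvec \<Rightarrow> fvec" where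
  "Pproj Lam \<alpha> \<beta> v = (\<lambda>m. omega Lam \<alpha> \<beta> m * finner Lam (omega Lam \<alpha> \<beta>) v)"

end

theory Submission
  imports Defs
begin

text \<open>
  Write theta_m = alpha m + beta_m. Every coefficient of omega has modulus 1/sqrt(2 Lambda + 1),
  so the expectation of a diagonal operator in omega is the mean of its diagonal. This gives (ii),
  and also <x^2> = (sum of b_m^2) / (2 Lambda + 1) for all alpha and beta. Since x_- is the adjoint
  of x_+, <x_1>^2 + <x_2>^2 = <x_+> <x_-> = |<x_+>|^2, and
  <x_+> = (sum of b_m e^(i (theta_(m-1) - theta_m))) / (2 Lambda + 1) has modulus at most
  (sum of b_m) / (2 Lambda + 1), with equality for beta = 0; this is the first half of (iii).
  The estimate then follows from (sum of b_m^2) = 2 Lambda + 2 (Lambda - 1) Lambda (Lambda + 1) / (3 k)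
  and b_m >= 1 for 1 - Lambda <= m <= Lambda. Part (i) is the orthogonality of the functions
  e^(i alpha j) on [0, 2 pi].
\<close>

lemma symmetric_int_interval_Suc:
  "{- int (Suc n)..int (Suc n)} = insert (int n + 1) (insert (- int n - 1) {- int n..int n})"
  by auto

lemma sum_symmetric_int_interval_Suc:
  "(\<Sum>m\<in>{- int (Suc n)..int (Suc n)}. f m)
     = f (int n + 1) + f (- int n - 1) + (\<Sum>m\<in>{- int n..int n}. f m)"
  unfolding symmetric_int_interval_Suc by (simp add: add.assoc)

lemma sum_symmetric_int_interval_id: "(\<Sum>m\<in>{- int n..int n}. m) = 0"
proof (induction n)
  case (Suc n)
  then show ?case
    unfolding sum_symmetric_int_interval_Suc by simp
qed simp

lemma sum_symmetric_int_interval_square: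
  "3 * (\<Sum>m\<in>{- int n..int n}. m\<^sup>2) = int n * (int n + 1) * (2 * int n + 1)"
proof (induction n)
  case (Suc n)
  then show ?case
    unfolding sum_symmetric_int_interval_Suc by (simp add: algebra_simps power2_eq_square)
qed simp

lemma symmetric_int_interval_eq_insert: "{- int n..int n} = insert (- int n) {1 - int n..int n}"
  by auto

lemma sum_symmetric_int_interval_shift:
  fixes f :: "int \<Rightarrow> 'a::comm_monoid_add"
  assumes "f (- int n) = 0" and "f (int n + 1) = 0"
  shows "(\<Sum>m\<in>{- int n..int n}. f (m + 1)) = (\<Sum>m\<in>{- int n..int n}. f m)"
proof -
  have "(\<Sum>m\<in>{- int n..int n}. f (m + 1)) = (\<Sum>m\<in>{1 - int n..int n + 1}. f m)"
    by (rule sum.reindex_bij_witness[of _ "\<lambda>m. m - 1" "\<lambda>m. m + 1"]) auto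
  also have "\<dots> = (\<Sum>m\<in>insert (- int n) {1 - int n..int n + 1}. f m)"
    using assms(1) by simp
  also have "insert (- int n) {1 - int n..int n + 1} = insert (int n + 1) {- int n..int n}"
    by auto
  also have "(\<Sum>m\<in>insert (int n + 1) {- int n..int n}. f m) = (\<Sum>m\<in>{- int n..int n}. f m)"
    using assms(2) by simp
  finally show ?thesis .
qed

lemma has_integral_cis_int_multiple:
  fixes j :: int
  shows "((\<lambda>a. cis (a * of_int j)) has_integral (if j = 0 then of_real (2 * pi) else 0)) {0..2 * pi}"
proof (cases "j = 0")
  case True
  then show ?thesis
    using has_integral_const_real[of "1::complex" 0 "2 * pi"] by (simp add: scaleR_conv_of_real)
next
  case False
  define g where "g x = exp (\<i> * of_real x * of_int j) / (\<i> * of_int j)" for x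
  have "(g has_vector_derivative cis (x * of_int j)) (at x within {0..2 * pi})" for x
  proof -
    have "((\<lambda>z. exp (\<i> * z * of_int j) / (\<i> * of_int j)) has_field_derivative
        exp (\<i> * of_real x * of_int j)) (at (of_real x))"
      using False by (auto intro!: derivative_eq_intros)
    then have "(g has_vector_derivative exp (\<i> * of_real x * of_int j)) (at x)"
      unfolding g_def by (rule has_vector_derivative_real_field)
    then show ?thesis
      by (simp add: cis_conv_exp mult_ac has_vector_derivative_at_within)
  qed
  then have "((\<lambda>a. cis (a * of_int j)) has_integral (g (2 * pi) - g 0)) {0..2 * pi}"
    by (intro fundamental_theorem_of_calculus) auto
  moreover have "g (2 * pi) = g 0"
    using cis_multiple_2pi[of "of_int j"] by (simp add: g_def cis_conv_exp mult_ac)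
  ultimately show ?thesis
    using False by simp
qed

lemma two_of_nat_plus_one_neq_zero: "(2 * of_nat n + 1 :: 'a::semiring_char_0) \<noteq> 0"
  using of_nat_neq_0[of "2 * n", where 'a='a] by (simp add: add.commute)

lemma cnj_omega_mult_omega:
  assumes "m \<in> {- int n..int n}" and "m' \<in> {- int n..int n}"
  shows "cnj (omega n \<alpha> \<beta> m) * omega n \<alpha> \<beta> m'
    = cis ((\<alpha> * of_int m' + \<beta> m') - (\<alpha> * of_int m + \<beta> m)) / (2 * of_nat n + 1)"
proof -
  have omega_cis: "omega n \<alpha> \<beta> j = cis (\<alpha> * of_int j + \<beta> j) / of_real (sqrt (2 * real n + 1))"
    if "j \<in> {- int n..int n}" for j
    using that unfolding omega_def cis_conv_exp by simp
  have "cnj (omega n \<alpha> \<beta> m) * omega n \<alpha> \<beta> m'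
      = cis (- (\<alpha> * of_int m + \<beta> m)) * cis (\<alpha> * of_int m' + \<beta> m')
        / (of_real (sqrt (2 * real n + 1)))\<^sup>2"
    using assms by (simp add: omega_cis cis_cnj power2_eq_square)
  also have "(of_real (sqrt (2 * real n + 1)))\<^sup>2 = (2 * of_nat n + 1 :: complex)"
    by (simp flip: of_real_power)
  also have "cis (- (\<alpha> * of_int m + \<beta> m)) * cis (\<alpha> * of_int m' + \<beta> m')
      = cis ((\<alpha> * of_int m' + \<beta> m') - (\<alpha> * of_int m + \<beta> m))"
    by (simp add: cis_mult algebra_simps)
  finally show ?thesis .
qed

lemma expect_diagonal_omega:
  "expect n (\<lambda>v m. d m * v m) (omega n \<alpha> \<beta>) = (\<Sum>m\<in>{- int n..int n}. d m) / (2 * of_nat n + 1)"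
  unfolding expect_def finner_def sum_divide_distrib
  by (rule sum.cong) (simp_all add: mult.left_commute[of _ "d _"] cnj_omega_mult_omega)

lemma expect_Lop_omega: "expect n Lop (omega n \<alpha> \<beta>) = 0"
  using expect_diagonal_omega[of n of_int] sum_symmetric_int_interval_id[of n]
  by (simp add: Lop_def[abs_def] flip: of_int_sum)

lemma varL_omega: "varL n (omega n \<alpha> \<beta>) = of_real (real n * (real n + 1) / 3)"
proof -
  have "(\<lambda>v. Lop (Lop v)) = (\<lambda>v m. (of_int m)\<^sup>2 * v m)"
    by (simp add: Lop_def fun_eq_iff power2_eq_square)
  then have "expect n (\<lambda>v. Lop (Lop v)) (omega n \<alpha> \<beta>)
      = (\<Sum>m\<in>{- int n..int n}. (of_int m)\<^sup>2) / (2 * of_nat n + 1)"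
    by (simp add: expect_diagonal_omega)
  also have "3 * (\<Sum>m\<in>{- int n..int n}. (of_int m)\<^sup>2)
      = (of_nat n * (of_nat n + 1) * (2 * of_nat n + 1) :: complex)"
    using arg_cong[OF sum_symmetric_int_interval_square[of n], of "of_int :: int \<Rightarrow> complex"]
    by (simp add: of_int_sum)
  then have "(\<Sum>m\<in>{- int n..int n}. (of_int m)\<^sup>2) / (2 * of_nat n + 1)
      = (of_nat n * (of_nat n + 1) / 3 :: complex)"
    using two_of_nat_plus_one_neq_zero[where 'a=complex] by (simp add: field_simps)
  finally show ?thesis
    by (simp add: varL_def expect_Lop_omega)
qed

lemma Pproj_eq_trigonometric_polynomial:
  assumes m: "m \<in> {- int n..int n}"
  shows "of_real ((2 * real n + 1) / (2 * pi)) * Pproj n \<alpha> \<beta> v m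
    = (\<Sum>j\<in>{- int n..int n}. v j * cis (\<beta> m - \<beta> j) / of_real (2 * pi) * cis (\<alpha> * of_int (m - j)))"
proof -
  have "of_real ((2 * real n + 1) / (2 * pi)) * (omega n \<alpha> \<beta> m * (cnj (omega n \<alpha> \<beta> j) * v j))
      = v j * cis (\<beta> m - \<beta> j) / of_real (2 * pi) * cis (\<alpha> * of_int (m - j))"
    if j: "j \<in> {- int n..int n}" for j
  proof -
    have "cis ((\<alpha> * of_int m + \<beta> m) - (\<alpha> * of_int j + \<beta> j))
        = cis (\<beta> m - \<beta> j) * cis (\<alpha> * of_int (m - j))"
      by (simp add: cis_mult algebra_simps)
    then have "omega n \<alpha> \<beta> m * (cnj (omega n \<alpha> \<beta> j) * v j)
        = v j * cis (\<beta> m - \<beta> j) * cis (\<alpha> * of_int (m - j)) / (2 * of_nat n + 1)"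
      using cnj_omega_mult_omega[OF j m] by (simp add: mult_ac)
    then show ?thesis
      using two_of_nat_plus_one_neq_zero[where 'a=complex] by (simp add: field_simps)
  qed
  then show ?thesis
    unfolding Pproj_def finner_def sum_distrib_left by (intro sum.cong) auto
qed

lemma has_integral_Pproj:
  assumes v: "v \<in> hspace n"
  shows "((\<lambda>\<alpha>. of_real ((2 * real n + 1) / (2 * pi)) * Pproj n \<alpha> \<beta> v m) has_integral v m)
    {0..2 * pi}"
proof (cases "m \<in> {- int n..int n}")
  case False
  then have "Pproj n \<alpha> \<beta> v m = 0" for \<alpha>
    by (auto simp: Pproj_def omega_def)
  moreover have "v m = 0"
    using v False by (simp add: hspace_def)
  ultimately show ?thesis
    by simp
next
  case m: True
  define c where "c j = v j * cis (\<beta> m - \<beta> j) / of_real (2 * pi)" for j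
  have "((\<lambda>\<alpha>. \<Sum>j\<in>{- int n..int n}. c j * cis (\<alpha> * of_int (m - j))) has_integral
      (\<Sum>j\<in>{- int n..int n}. c j * (if m - j = 0 then of_real (2 * pi) else 0))) {0..2 * pi}"
    by (intro has_integral_sum has_integral_mult_right has_integral_cis_int_multiple) simp
  also have "(\<Sum>j\<in>{- int n..int n}. c j * (if m - j = 0 then of_real (2 * pi) else 0)) = v m"
    using m by (simp add: c_def if_distrib cong: if_cong)
  finally show ?thesis
    unfolding Pproj_eq_trigonometric_polynomial[OF m] c_def .
qed

definition breal :: "nat \<Rightarrow> real \<Rightarrow> int \<Rightarrow> real" where
  "breal n k m =
    (if 1 - int n \<le> m \<and> m \<le> int n then sqrt (1 + real_of_int (m * (m - 1)) / k) else 0)"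

lemma bcoef_eq_of_real: "bcoef n k m = of_real (breal n k m)"
  by (simp add: bcoef_def breal_def)

lemma breal_ge_one:
  assumes "0 < k" and "1 - int n \<le> m" and "m \<le> int n"
  shows "1 \<le> breal n k m"
proof -
  have "0 \<le> real_of_int m * (real_of_int m - 1)"
    by (cases "m \<le> 0") (simp_all add: mult_nonpos_nonpos)
  then show ?thesis
    using assms by (simp add: breal_def zero_le_divide_iff)
qed

lemma breal_nonneg: "0 < k \<Longrightarrow> 0 \<le> breal n k m"
  using breal_ge_one[of k n m] by (cases "1 - int n \<le> m \<and> m \<le> int n") (auto simp: breal_def)

lemma xsqop_eq_diagonal:
  "xsqop n k = (\<lambda>v m. (bcoef n k m ^ 2 + bcoef n k (m + 1) ^ 2) / 2 * v m)"
  unfolding xsqop_def x1op_def x2op_def xplus_def xminus_def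
  by (simp add: fun_eq_iff field_simps power2_eq_square)

lemma expect_x1op: "expect n (x1op n k) w = (expect n (xplus n k) w + expect n (xminus n k) w) / 2"
  unfolding expect_def finner_def x1op_def
  by (simp add: sum_divide_distrib sum.distrib[symmetric] algebra_simps)

lemma expect_x2op: "expect n (x2op n k) w = (expect n (xplus n k) w - expect n (xminus n k) w) / (2 * \<i>)"
  unfolding expect_def finner_def x2op_def
  by (simp add: sum_divide_distrib sum_subtractf[symmetric] algebra_simps)

lemma cnj_finner: "cnj (finner n u v) = finner n v u"
  by (simp add: finner_def mult.commute)

lemma finner_xminus: "finner n u (xminus n k v) = finner n (xplus n k u) v"
proof -
  have "finner n (xplus n k u) v = (\<Sum>m\<in>{- int n..int n}. bcoef n k m * cnj (u (m - 1)) * v m)"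
    by (simp add: finner_def xplus_def bcoef_eq_of_real)
  also have "\<dots> = (\<Sum>m\<in>{- int n..int n}. bcoef n k (m + 1) * cnj (u m) * v (m + 1))"
    using sum_symmetric_int_interval_shift[of "\<lambda>m. bcoef n k m * cnj (u (m - 1)) * v m" n]
    by (simp add: bcoef_def)
  finally show ?thesis
    by (simp add: finner_def xminus_def mult_ac)
qed

lemma expect_xminus: "expect n (xminus n k) w = cnj (expect n (xplus n k) w)"
  by (simp add: expect_def finner_xminus cnj_finner)

lemma varx_eq: "varx n k w = expect n (xsqop n k) w - of_real ((cmod (expect n (xplus n k) w))\<^sup>2)"
proof -
  have "((p + q) / 2)\<^sup>2 + ((p - q) / (2 * \<i>))\<^sup>2 = p * q" for p q :: complex
    by (simp add: field_simps power2_eq_square)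
  moreover have "p * cnj p = of_real ((cmod p)\<^sup>2)" for p
    using complex_norm_square[of p] by simp
  ultimately show ?thesis
    by (simp add: varx_def expect_x1op expect_x2op expect_xminus diff_diff_eq)
qed

lemma expect_xsqop_omega:
  "expect n (xsqop n k) (omega n \<alpha> \<beta>)
    = of_real ((\<Sum>m\<in>{- int n..int n}. (breal n k m)\<^sup>2) / (2 * real n + 1))"
proof -
  have "expect n (xsqop n k) (omega n \<alpha> \<beta>)
      = (\<Sum>m\<in>{- int n..int n}. (bcoef n k m ^ 2 + bcoef n k (m + 1) ^ 2) / 2) / (2 * of_nat n + 1)"
    unfolding xsqop_eq_diagonal by (rule expect_diagonal_omega)
  also have "(\<Sum>m\<in>{- int n..int n}. bcoef n k (m + 1) ^ 2) = (\<Sum>m\<in>{- int n..int n}. bcoef n k m ^ 2)"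
    by (rule sum_symmetric_int_interval_shift) (simp_all add: bcoef_def)
  then have "(\<Sum>m\<in>{- int n..int n}. (bcoef n k m ^ 2 + bcoef n k (m + 1) ^ 2) / 2)
      = (\<Sum>m\<in>{- int n..int n}. bcoef n k m ^ 2)"
    by (simp add: sum.distrib flip: sum_divide_distrib)
  finally show ?thesis
    by (simp add: bcoef_eq_of_real)
qed

lemma expect_xplus_omega:
  "expect n (xplus n k) (omega n \<alpha> \<beta>)
    = (\<Sum>m\<in>{- int n..int n}. of_real (breal n k m)
        * cis ((\<alpha> * of_int (m - 1) + \<beta> (m - 1)) - (\<alpha> * of_int m + \<beta> m))) / (2 * of_nat n + 1)"
  unfolding expect_def finner_def xplus_def sum_divide_distrib
proof (rule sum.cong)
  fix m
  assume m: "m \<in> {- int n..int n}"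
  show "cnj (omega n \<alpha> \<beta> m) * (bcoef n k m * omega n \<alpha> \<beta> (m - 1))
      = of_real (breal n k m) * cis ((\<alpha> * of_int (m - 1) + \<beta> (m - 1)) - (\<alpha> * of_int m + \<beta> m))
        / (2 * of_nat n + 1)"
  proof (cases "m = - int n")
    case True
    then show ?thesis
      by (simp add: bcoef_def breal_def)
  next
    case False
    then have "m - 1 \<in> {- int n..int n}"
      using m by auto
    then show ?thesis
      using cnj_omega_mult_omega[OF m] by (simp add: bcoef_eq_of_real mult.left_commute)
  qed
qed simp

lemma norm_two_of_nat_plus_one: "cmod (2 * of_nat n + 1) = 2 * real n + 1"
  using norm_of_nat[of "2 * n + 1", where 'a=complex] by (simp add: add.commute)

lemma norm_expect_xplus_omega_le:
  assumes "0 < k"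
  shows "cmod (expect n (xplus n k) (omega n \<alpha> \<beta>))
    \<le> (\<Sum>m\<in>{- int n..int n}. breal n k m) / (2 * real n + 1)"
proof -
  let ?phase = "\<lambda>m. (\<alpha> * of_int (m - 1) + \<beta> (m - 1)) - (\<alpha> * of_int m + \<beta> m)"
  have "cmod (\<Sum>m\<in>{- int n..int n}. of_real (breal n k m) * cis (?phase m))
      \<le> (\<Sum>m\<in>{- int n..int n}. cmod (of_real (breal n k m) * cis (?phase m)))"
    by (rule norm_sum)
  also have "\<dots> = (\<Sum>m\<in>{- int n..int n}. breal n k m)"
    using breal_nonneg[OF assms] by (simp add: norm_mult)
  finally show ?thesis
    unfolding expect_xplus_omega norm_divide norm_two_of_nat_plus_one by (simp add: divide_right_mono)
qed

lemma norm_expect_xplus_omega_zero: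
  assumes "0 < k"
  shows "cmod (expect n (xplus n k) (omega n \<alpha> (\<lambda>_. 0)))
    = (\<Sum>m\<in>{- int n..int n}. breal n k m) / (2 * real n + 1)"
proof -
  have "expect n (xplus n k) (omega n \<alpha> (\<lambda>_. 0))
      = of_real (\<Sum>m\<in>{- int n..int n}. breal n k m) * cis (- \<alpha>) / (2 * of_nat n + 1)"
    by (simp add: expect_xplus_omega algebra_simps sum_distrib_left)
  moreover have "0 \<le> (\<Sum>m\<in>{- int n..int n}. breal n k m)"
    using breal_nonneg[OF assms] by (simp add: sum_nonneg)
  ultimately show ?thesis
    by (simp add: norm_divide norm_mult norm_two_of_nat_plus_one flip: of_real_sum)
qed

lemma Re_varx_omega:
  "Re (varx n k (omega n \<alpha> \<beta>))
    = (\<Sum>m\<in>{- int n..int n}. (breal n k m)\<^sup>2) / (2 * real n + 1)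
      - (cmod (expect n (xplus n k) (omega n \<alpha> \<beta>)))\<^sup>2"
  by (simp add: varx_eq expect_xsqop_omega)

lemma Re_varx_omega_zero_le:
  assumes "0 < k"
  shows "Re (varx n k (omega n \<alpha> (\<lambda>_. 0))) \<le> Re (varx n k (omega n \<alpha> \<beta>))"
  unfolding Re_varx_omega norm_expect_xplus_omega_zero[OF assms]
  using norm_expect_xplus_omega_le[OF assms] by (simp add: power_mono)

lemma Re_varx_omega_zero:
  assumes "0 < k"
  shows "Re (varx n k (omega n \<alpha> (\<lambda>_. 0)))
    = (\<Sum>m\<in>{- int n..int n}. (breal n k m)\<^sup>2) / (2 * real n + 1)
      - ((\<Sum>m\<in>{- int n..int n}. breal n k m) / (2 * real n + 1))\<^sup>2"
  unfolding Re_varx_omega norm_expect_xplus_omega_zero[OF assms] ..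

lemma sum_pronic_int_interval:
  "3 * (\<Sum>m\<in>{1 - int n..int n}. m * (m - 1)) = 2 * (int n - 1) * int n * (int n + 1)"
proof -
  have "(\<Sum>m\<in>{- int n..int n}. m * (m - 1))
      = (\<Sum>m\<in>{- int n..int n}. m\<^sup>2) - (\<Sum>m\<in>{- int n..int n}. m)"
    by (simp add: power2_eq_square algebra_simps sum_subtractf)
  moreover have "(\<Sum>m\<in>{- int n..int n}. m * (m - 1))
      = int n * (int n + 1) + (\<Sum>m\<in>{1 - int n..int n}. m * (m - 1))"
    by (simp add: symmetric_int_interval_eq_insert algebra_simps)
  ultimately show ?thesis
    using sum_symmetric_int_interval_square[of n] sum_symmetric_int_interval_id[of n] by algebra
qed

lemma sum_breal_square:
  assumes "0 < k"
  shows "(\<Sum>m\<in>{- int n..int n}. (breal n k m)\<^sup>2)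
    = 2 * real n + 2 * (real n - 1) * real n * (real n + 1) / (3 * k)"
proof -
  have "(breal n k m)\<^sup>2 = 1 + real_of_int (m * (m - 1)) / k" if "m \<in> {1 - int n..int n}" for m
    using that breal_ge_one[OF assms, of n m] by (simp add: breal_def)
  then have "(\<Sum>m\<in>{- int n..int n}. (breal n k m)\<^sup>2)
      = (\<Sum>m\<in>{1 - int n..int n}. 1 + real_of_int (m * (m - 1)) / k)"
    by (simp add: symmetric_int_interval_eq_insert breal_def)
  also have "\<dots> = 2 * real n + real_of_int (\<Sum>m\<in>{1 - int n..int n}. m * (m - 1)) / k"
    by (simp add: sum.distrib sum_divide_distrib)
  also have "real_of_int (\<Sum>m\<in>{1 - int n..int n}. m * (m - 1))
      = 2 * (real n - 1) * real n * (real n + 1) / 3"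
    using arg_cong[OF sum_pronic_int_interval[of n], of real_of_int] by simp
  finally show ?thesis
    by simp
qed

lemma sum_breal_ge:
  assumes "0 < k"
  shows "2 * real n \<le> (\<Sum>m\<in>{- int n..int n}. breal n k m)"
proof -
  have "2 * real n = (\<Sum>m\<in>{1 - int n..int n}. 1)"
    by simp
  also have "\<dots> \<le> (\<Sum>m\<in>{1 - int n..int n}. breal n k m)"
    using breal_ge_one[OF assms] by (intro sum_mono) simp
  also have "\<dots> = (\<Sum>m\<in>{- int n..int n}. breal n k m)"
    by (simp add: symmetric_int_interval_eq_insert breal_def)
  finally show ?thesis .
qed

lemma variance_estimate_real:
  fixes x k S :: real
  assumes x: "1 \<le> x" and k: "x\<^sup>2 * (x + 1)\<^sup>2 \<le> k" and S: "2 * x \<le> S"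
  shows "(2 * x + 2 * (x - 1) * x * (x + 1) / (3 * k)) / (2 * x + 1) - (S / (2 * x + 1))\<^sup>2
    < 1 / (x + 1) * (1 / 2 + 1 / (3 * x))"
proof -
  have pos: "0 < x\<^sup>2 * (x + 1)\<^sup>2"
    using x by simp
  moreover have "0 < k"
    using pos k by linarith
  ultimately have "0 < (3 * k) * (3 * (x\<^sup>2 * (x + 1)\<^sup>2))"
    by simp
  then have "2 * (x - 1) * x * (x + 1) / (3 * k)
      \<le> 2 * (x - 1) * x * (x + 1) / (3 * (x\<^sup>2 * (x + 1)\<^sup>2))"
    using x k by (intro divide_left_mono) auto
  also have "\<dots> = 2 * (x - 1) / (3 * x * (x + 1))"
    using x by (simp add: power2_eq_square)
  finally have "(2 * x + 2 * (x - 1) * x * (x + 1) / (3 * k)) / (2 * x + 1)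
      \<le> (2 * x + 2 * (x - 1) / (3 * x * (x + 1))) / (2 * x + 1)"
    using x by (intro divide_right_mono) auto
  moreover have "(2 * x / (2 * x + 1))\<^sup>2 \<le> (S / (2 * x + 1))\<^sup>2"
    using x S by (intro power_mono divide_right_mono) auto
  moreover have "(2 * x + 2 * (x - 1) / (3 * x * (x + 1))) / (2 * x + 1) - (2 * x / (2 * x + 1))\<^sup>2
      + (15 * x + 6) / (6 * x * (x + 1) * (2 * x + 1)\<^sup>2) = 1 / (x + 1) * (1 / 2 + 1 / (3 * x))"
  proof -
    define y z where "y = x + 1" and "z = 2 * x + 1"
    have "x \<noteq> 0" "y \<noteq> 0" "z \<noteq> 0"
      using x by (auto simp: y_def z_def)
    then have "(2 * x + 2 * (x - 1) / (3 * x * y)) / z - (2 * x / z)\<^sup>2 + (15 * x + 6) / (6 * x * y * z\<^sup>2)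
        = 1 / y * (1 / 2 + 1 / (3 * x))"
      by (simp add: field_simps power2_eq_square) (simp add: y_def z_def algebra_simps)
    then show ?thesis
      by (simp add: y_def z_def)
  qed
  moreover have "0 < (15 * x + 6) / (6 * x * (x + 1) * (2 * x + 1)\<^sup>2)"
    using x by simp
  ultimately show ?thesis
    by linarith
qed

theorem mainTheorem5:
  fixes Lam :: nat and k :: real
  assumes "1 \<le> Lam"
    and "k \<ge> real Lam ^ 2 * (real Lam + 1) ^ 2"
  shows
    "(\<forall>\<beta> :: int \<Rightarrow> real. \<forall>v \<in> hspace Lam. \<forall>m :: int.
        ((\<lambda>\<alpha>. complex_of_real ((2 * real Lam + 1) / (2 * pi)) * Pproj Lam \<alpha> \<beta> v m)
           has_integral v m) {0..2 * pi})
   \<and> (\<forall>\<alpha> \<in> {0..<2 * pi}. \<forall>\<beta> :: int \<Rightarrow> real.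
        expect Lam Lop (omega Lam \<alpha> \<beta>) = 0
        \<and> varL Lam (omega Lam \<alpha> \<beta>) = of_real (real Lam * (real Lam + 1) / 3))
   \<and> (\<forall>\<alpha> \<in> {0..<2 * pi}. \<forall>\<beta> :: int \<Rightarrow> real.
        Re (varx Lam k (omega Lam \<alpha> \<beta>)) \<ge> Re (varx Lam k (omega Lam \<alpha> (\<lambda>_. 0))))
   \<and> (\<forall>\<alpha> \<in> {0..<2 * pi}.
        Re (varx Lam k (omega Lam \<alpha> (\<lambda>_. 0)))
          < 1 / (real Lam + 1) * (1 / 2 + 1 / (3 * real Lam)))
   \<and> (Lam \<ge> 2 \<longrightarrow>
        1 / (real Lam + 1) * (1 / 2 + 1 / (3 * real Lam)) \<le> 2 / (3 * (real Lam + 1)))"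
proof -
  have "0 < real Lam ^ 2 * (real Lam + 1) ^ 2"
    using assms(1) by simp
  then have k: "0 < k"
    using assms(2) by linarith
  have "Re (varx Lam k (omega Lam \<alpha> (\<lambda>_. 0)))
      < 1 / (real Lam + 1) * (1 / 2 + 1 / (3 * real Lam))" for \<alpha>
    unfolding Re_varx_omega_zero[OF k] sum_breal_square[OF k]
    using assms sum_breal_ge[OF k, of Lam] by (intro variance_estimate_real) auto
  moreover have "1 / (real Lam + 1) * (1 / 2 + 1 / (3 * real Lam)) \<le> 2 / (3 * (real Lam + 1))"
    if "Lam \<ge> 2"
  proof -
    have "1 / 2 + 1 / (3 * real Lam) \<le> 2 / 3"
      using that by (simp add: field_simps)
    then have "1 / (real Lam + 1) * (1 / 2 + 1 / (3 * real Lam)) \<le> 1 / (real Lam + 1) * (2 / 3)"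
      by (rule mult_left_mono) simp
    also have "\<dots> = 2 / (3 * (real Lam + 1))"
      by simp
    finally show ?thesis .
  qed
  ultimately show ?thesis
    using has_integral_Pproj expect_Lop_omega varL_omega Re_varx_omega_zero_le[OF k] by blast
qed

end
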